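(* Let $\mathcal{F}$ be a semi-metric space with semi-metric $d$, $x\in\mathcal{F}$, and let $\{X_i\}$ be an $\mathcal{F}$-valued sequence $X_i=g(\alpha_i,\alpha_{i-1},\ldots)$ with $\alpha_k$ i.i.d. and $g$ measurable; for $m\ge1$ let $X_i^{(m)}=g(\alpha_i,\ldots,\alpha_{i-m+1},\alpha'_{i-m},\ldots)$ with $\alpha'_k$ independent copies of $\alpha_0$, let $\psi$ be convex increasing on $[0,\infty)$ with $\psi(0)=0$, and $\beta_m=\|d(X_1,X_1^{(m)})\|_\psi$ with $\sum_m\beta_m<\infty$. Let $\varphi(h)=P(X_1\in B(x,h))$, $B(x,h)=\{x':d(x',x)\le h\}$, let $H=H_n$ be a deterministic bandwidth and $k=\sum_{i=1}^nI\{X_i\in B(x,H)\}$. Suppose $H'=H'_n$ and $H''=H''_n$ are sequences with $H'<H<H''$ and there are integers $1\le m=m_n\le n$ with $n\varphi(H')/(m\log n)\to\infty$, $\sum_{n}n/\psi((H''-H)/\beta_m)<\infty$ and $\sum_nn/\psi((H-H')/\beta_m)<\infty$. Then almost surely $n\varphi(H')/2\le k\le2n\varphi(H'')$ for all $n$ large enough.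
   Context: $\|Z\|_\psi=\inf\{c>0:E[\psi(|Z|/c)]\le1\}$. *)

theory Defs
  imports "HOL-Probability.Probability"
begin

text \<open>Semi-metric in the sense of functional data analysis (Ferraty--Vieu):
  a pseudo-metric, i.e. d(x,x)=0, symmetry and triangle inequality,
  but d(x,y)=0 need not imply x=y.\<close>
definition semimetric_on :: "'f set \<Rightarrow> ('f \<Rightarrow> 'f \<Rightarrow> real) \<Rightarrow> bool" where
  "semimetric_on S d \<longleftrightarrow>
     (\<forall>x\<in>S. d x x = 0) \<and>
     (\<forall>x\<in>S. \<forall>y\<in>S. d x y = d y x) \<and>
     (\<forall>x\<in>S. \<forall>y\<in>S. \<forall>z\<in>S. d x z \<le> d x y + d y z)"

definition orlicz_norm :: "'a measure \<Rightarrow> (real \<Rightarrow> real) \<Rightarrow> ('a \<Rightarrow> real) \<Rightarrow> real" where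
  "orlicz_norm M \<psi> Z =
     Inf {c::real. c > 0 \<and> (\<integral>\<^sup>+ \<omega>. ennreal (\<psi> (\<bar>Z \<omega>\<bar> / c)) \<partial>M) \<le> 1}"

definition orlicz_finite :: "'a measure \<Rightarrow> (real \<Rightarrow> real) \<Rightarrow> ('a \<Rightarrow> real) \<Rightarrow> bool" where
  "orlicz_finite M \<psi> Z \<longleftrightarrow>
     (\<exists>c::real. c > 0 \<and> (\<integral>\<^sup>+ \<omega>. ennreal (\<psi> (\<bar>Z \<omega>\<bar> / c)) \<partial>M) \<le> 1)"

end

theory Submission
  imports Defs
begin

text \<open>Replace each \<open>X i\<close> by its \<open>m\<close>-approximation \<open>W i\<close>, built from the innovations at
  lags \<open>< m\<close> and from copies that are fresh for every \<open>i\<close>. The Orlicz bound on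
  \<open>d (X i) (W i)\<close> and Borel--Cantelli show that almost surely, for large \<open>n\<close>, every
  \<open>X i\<close> with \<open>i \<le> n\<close> is within \<open>H - H'\<close> and within \<open>H'' - H\<close> of \<open>W i\<close>; by the triangle
  inequality \<open>k\<close> is then squeezed between the numbers of \<open>W i\<close> in the balls of radius \<open>H'\<close>
  and \<open>H''\<close>. Along each residue class modulo \<open>m\<close> the \<open>W i\<close> are independent copies of
  \<open>X 1\<close>, so Chernoff bounds per class, a union bound over the \<open>m\<close> classes and the growth
  of \<open>n \<phi>(H') / (m log n)\<close> give summable error probabilities for both counts.\<close>

section \<open>Chernoff bounds for sums of independent indicators\<close>

lemma (in prob_space) expectation_exp_sum_indicators_le:
  fixes \<xi> :: "'i \<Rightarrow> 'a \<Rightarrow> real" and p c :: real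
  assumes fin: "finite I" and ind: "indep_vars (\<lambda>_. borel) \<xi> I"
    and bin: "\<And>i \<omega>. i \<in> I \<Longrightarrow> \<xi> i \<omega> \<in> {0,1}"
    and mean: "\<And>i. i \<in> I \<Longrightarrow> expectation (\<xi> i) = p"
  shows "expectation (\<lambda>\<omega>. exp (c * (\<Sum>i\<in>I. \<xi> i \<omega>))) \<le> exp (card I * p * (exp c - 1))"
proof -
  have exp_affine: "exp (c * \<xi> i \<omega>) = 1 + (exp c - 1) * \<xi> i \<omega>" if "i \<in> I" for i \<omega>
    using bin[OF that, of \<omega>] by auto
  have abs_\<xi>: "\<bar>\<xi> i \<omega>\<bar> \<le> 1" if "i \<in> I" for i \<omega>
    using bin[OF that, of \<omega>] by auto
  have integrable_\<xi>: "integrable M (\<xi> i)" if "i \<in> I" for i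
    by (rule integrable_const_bound[where B=1]) (use ind that abs_\<xi> in \<open>auto simp: indep_vars_def\<close>)
  have integrable_exp: "integrable M (\<lambda>\<omega>. exp (c * \<xi> i \<omega>))" if "i \<in> I" for i
    unfolding exp_affine[OF that] using integrable_\<xi>[OF that] by simp
  have "expectation (\<lambda>\<omega>. exp (c * (\<Sum>i\<in>I. \<xi> i \<omega>)))
      = expectation (\<lambda>\<omega>. \<Prod>i\<in>I. exp (c * \<xi> i \<omega>))"
    by (simp add: sum_distrib_left exp_sum fin)
  also have "\<dots> = (\<Prod>i\<in>I. expectation (\<lambda>\<omega>. exp (c * \<xi> i \<omega>)))"
    by (rule indep_vars_lebesgue_integral[OF fin _ integrable_exp])
       (auto intro: indep_vars_compose2[OF ind])
  also have "\<dots> \<le> (\<Prod>i\<in>I. exp (p * (exp c - 1)))"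
  proof (rule prod_mono)
    fix i assume i: "i \<in> I"
    have "expectation (\<lambda>\<omega>. exp (c * \<xi> i \<omega>)) = 1 + (exp c - 1) * p"
      using integrable_\<xi>[OF i] mean[OF i] by (simp add: exp_affine[OF i] prob_space)
    also have "\<dots> \<le> exp (p * (exp c - 1))"
      using exp_ge_add_one_self[of "p * (exp c - 1)"] by (simp add: mult.commute)
    finally show "0 \<le> expectation (\<lambda>\<omega>. exp (c * \<xi> i \<omega>)) \<and>
        expectation (\<lambda>\<omega>. exp (c * \<xi> i \<omega>)) \<le> exp (p * (exp c - 1))"
      by simp
  qed
  also have "\<dots> = exp (card I * p * (exp c - 1))"
    by (simp add: exp_of_nat_mult[symmetric] mult.assoc)
  finally show ?thesis .
qed

lemma (in prob_space) prob_sum_indicators_exp_moment: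
  fixes \<xi> :: "'i \<Rightarrow> 'a \<Rightarrow> real" and p a c :: real
  assumes fin: "finite I" and ind: "indep_vars (\<lambda>_. borel) \<xi> I"
    and bin: "\<And>i \<omega>. i \<in> I \<Longrightarrow> \<xi> i \<omega> \<in> {0,1}"
    and mean: "\<And>i. i \<in> I \<Longrightarrow> expectation (\<xi> i) = p"
  shows "prob {\<omega>\<in>space M. a \<le> c * (\<Sum>i\<in>I. \<xi> i \<omega>)} \<le> exp (card I * p * (exp c - 1) - a)"
proof -
  have rv: "\<xi> i \<in> borel_measurable M" if "i \<in> I" for i
    using ind that unfolding indep_vars_def by blast
  have sum_bound: "c * (\<Sum>i\<in>I. \<xi> i \<omega>) \<le> card I * \<bar>c\<bar>" for \<omega>
  proof -
    have "c * (\<Sum>i\<in>I. \<xi> i \<omega>) = (\<Sum>i\<in>I. c * \<xi> i \<omega>)"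
      by (simp add: sum_distrib_left)
    also have "\<dots> \<le> card I * \<bar>c\<bar>"
    proof (rule sum_bounded_above)
      fix i assume "i \<in> I"
      then show "c * \<xi> i \<omega> \<le> \<bar>c\<bar>"
        using bin[of i \<omega>] by auto
    qed
    finally show ?thesis .
  qed
  have integrable: "integrable M (\<lambda>\<omega>. exp (c * (\<Sum>i\<in>I. \<xi> i \<omega>)))"
  proof (rule integrable_const_bound[where B="exp (card I * \<bar>c\<bar>)"])
    show "AE \<omega> in M. norm (exp (c * (\<Sum>i\<in>I. \<xi> i \<omega>))) \<le> exp (card I * \<bar>c\<bar>)"
      using sum_bound by (intro AE_I2) simp
  qed (use rv in simp)
  have "prob {\<omega>\<in>space M. a \<le> c * (\<Sum>i\<in>I. \<xi> i \<omega>)}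
      = prob {\<omega>\<in>space M. exp a \<le> exp (c * (\<Sum>i\<in>I. \<xi> i \<omega>))}"
    by simp
  also have "\<dots> \<le> expectation (\<lambda>\<omega>. exp (c * (\<Sum>i\<in>I. \<xi> i \<omega>))) / exp a"
    by (rule integral_Markov_inequality_measure[OF integrable, where A="space M"]) auto
  also have "\<dots> \<le> exp (card I * p * (exp c - 1)) / exp a"
    by (intro divide_right_mono expectation_exp_sum_indicators_le[OF fin ind bin mean]) simp_all
  also have "\<dots> = exp (card I * p * (exp c - 1) - a)"
    by (simp add: exp_diff)
  finally show ?thesis .
qed

lemma exp_quarter_minus_one_le: "exp (1/4 :: real) - 1 \<le> 5/16"
  using exp_bound[of "1/4 :: real"] by (simp add: power2_eq_square)

lemma exp_minus_quarter_minus_one_le: "exp (-1/4 :: real) - 1 \<le> -7/32"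
proof -
  have "32/25 \<le> exp (1/4 :: real)"
    using exp_lower_Taylor_quadratic[of "1/4 :: real"] by (simp add: power2_eq_square)
  then have "exp (-1/4) * (32/25) \<le> exp (-1/4) * exp (1/4 :: real)"
    by (rule mult_left_mono) simp
  also have "\<dots> = 1"
    by (simp flip: exp_add)
  finally show ?thesis by simp
qed

lemma (in prob_space) prob_sum_indicators_upper_tail:
  fixes \<xi> :: "'i \<Rightarrow> 'a \<Rightarrow> real" and p t :: real
  assumes "finite I" "indep_vars (\<lambda>_. borel) \<xi> I"
    and "\<And>i \<omega>. i \<in> I \<Longrightarrow> \<xi> i \<omega> \<in> {0,1}"
    and "\<And>i. i \<in> I \<Longrightarrow> expectation (\<xi> i) = p" and p: "0 \<le> p"
  shows "prob {\<omega>\<in>space M. card I * p + t \<le> (\<Sum>i\<in>I. \<xi> i \<omega>)} \<le> exp (card I * p / 16 - t / 4)"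
proof -
  have "prob {\<omega>\<in>space M. card I * p + t \<le> (\<Sum>i\<in>I. \<xi> i \<omega>)}
      = prob {\<omega>\<in>space M. (card I * p + t) / 4 \<le> 1/4 * (\<Sum>i\<in>I. \<xi> i \<omega>)}"
    by (intro arg_cong[where f=prob]) auto
  also have "\<dots> \<le> exp (card I * p * (exp (1/4) - 1) - (card I * p + t) / 4)"
    by (rule prob_sum_indicators_exp_moment[OF assms(1-4)])
  also have "\<dots> \<le> exp (card I * p / 16 - t / 4)"
  proof -
    have "card I * p * (exp (1/4) - 1) \<le> card I * p * (5/16)"
      using exp_quarter_minus_one_le p by (intro mult_left_mono) auto
    then show ?thesis by (simp add: field_simps)
  qed
  finally show ?thesis .
qed

lemma (in prob_space) prob_sum_indicators_lower_tail:
  fixes \<xi> :: "'i \<Rightarrow> 'a \<Rightarrow> real" and p t :: real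
  assumes "finite I" "indep_vars (\<lambda>_. borel) \<xi> I"
    and "\<And>i \<omega>. i \<in> I \<Longrightarrow> \<xi> i \<omega> \<in> {0,1}"
    and "\<And>i. i \<in> I \<Longrightarrow> expectation (\<xi> i) = p" and p: "0 \<le> p"
  shows "prob {\<omega>\<in>space M. (\<Sum>i\<in>I. \<xi> i \<omega>) \<le> card I * p - t} \<le> exp (card I * p / 32 - t / 4)"
proof -
  have "prob {\<omega>\<in>space M. (\<Sum>i\<in>I. \<xi> i \<omega>) \<le> card I * p - t}
      = prob {\<omega>\<in>space M. (t - card I * p) / 4 \<le> -1/4 * (\<Sum>i\<in>I. \<xi> i \<omega>)}"
    by (intro arg_cong[where f=prob]) auto
  also have "\<dots> \<le> exp (card I * p * (exp (-1/4) - 1) - (t - card I * p) / 4)"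
    by (rule prob_sum_indicators_exp_moment[OF assms(1-4)])
  also have "\<dots> \<le> exp (card I * p / 32 - t / 4)"
  proof -
    have "card I * p * (exp (-1/4) - 1) \<le> card I * p * (-7/32)"
      using exp_minus_quarter_minus_one_le p by (intro mult_left_mono) auto
    then show ?thesis by (simp add: field_simps)
  qed
  finally show ?thesis .
qed

section \<open>Indicators independent along residue classes\<close>

lemma card_residue_class_le:
  assumes "1 \<le> m" "m \<le> n"
  shows "real (card {i\<in>{1..n}. i mod m = r}) \<le> 2 * real n / real m"
proof -
  have "{i\<in>{1..n}. i mod m = r} \<subseteq> (\<lambda>q. q * m + r) ` {..n div m}"
  proof
    fix i assume i: "i \<in> {i\<in>{1..n}. i mod m = r}"
    then have "i = i div m * m + r" and "i div m \<le> n div m"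
      using div_mult_mod_eq[of i m] by (auto intro: div_le_mono)
    then show "i \<in> (\<lambda>q. q * m + r) ` {..n div m}" by blast
  qed
  then have "card {i\<in>{1..n}. i mod m = r} \<le> card ((\<lambda>q. q * m + r) ` {..n div m})"
    by (intro card_mono) auto
  also have "\<dots> \<le> n div m + 1"
    using card_image_le[of "{..n div m}" "\<lambda>q. q * m + r"] by simp
  finally have "real (card {i\<in>{1..n}. i mod m = r}) \<le> real (n div m) + 1"
    by linarith
  moreover have "1 \<le> n div m"
    using div_le_mono[OF assms(2), of m] assms(1) by simp
  moreover have "real (n div m) \<le> real n / real m"
    by (rule of_nat_div_le_of_nat)
  ultimately show ?thesis by linarith
qed

lemma sum_residue_classes:
  fixes f :: "nat \<Rightarrow> 'a::comm_monoid_add"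
  assumes "1 \<le> m"
  shows "(\<Sum>r<m. \<Sum>i\<in>{i\<in>{1..n}. i mod m = r}. f i) = (\<Sum>i\<in>{1..n}. f i)"
proof -
  have "(\<lambda>i. i mod m) ` {1..n} \<subseteq> {..<m}"
    using assms by auto
  from sum.group[OF _ _ this, of f] show ?thesis by simp
qed

lemma real_sum_card_residue_classes:
  assumes "1 \<le> m"
  shows "(\<Sum>r<m. real (card {i\<in>{1..n}. i mod m = r})) = real n"
  using sum_residue_classes[OF assms, of "\<lambda>_. 1 :: real" n] by simp

text \<open>Inside one residue class modulo \<open>m\<close> the indicators are independent, and there are
  only \<open>m\<close> classes: a Chernoff bound per class and a union bound over the classes.\<close>

lemma (in prob_space) prob_sum_indicators_lt_half:
  fixes \<xi> :: "nat \<Rightarrow> 'a \<Rightarrow> real" and p :: real and m n :: nat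
  assumes m: "1 \<le> m" "m \<le> n"
    and ind: "\<And>r. indep_vars (\<lambda>_. borel) \<xi> {i\<in>{1..n}. i mod m = r}"
    and bin: "\<And>i \<omega>. i \<in> {1..n} \<Longrightarrow> \<xi> i \<omega> \<in> {0,1}"
    and mean: "\<And>i. i \<in> {1..n} \<Longrightarrow> expectation (\<xi> i) = p" and p: "0 \<le> p"
  shows "prob {\<omega>\<in>space M. (\<Sum>i\<in>{1..n}. \<xi> i \<omega>) < real n * p / 2}
    \<le> real m * exp (- (real n * p / real m) / 16)"
proof -
  define C where "C r = {i\<in>{1..n}. i mod m = r}" for r
  define q where "q = real n * p / real m"
  define E where "E r = {\<omega>\<in>space M. (\<Sum>i\<in>C r. \<xi> i \<omega>) \<le> card (C r) * p - q / 2}" for r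
  have rv: "\<xi> i \<in> borel_measurable M" if "i \<in> {1..n}" for i
    using ind[of "i mod m"] that unfolding indep_vars_def by auto
  have E_sets: "E r \<in> events" for r
    unfolding E_def C_def by (intro borel_measurable_le borel_measurable_sum rv) auto
  have "{\<omega>\<in>space M. (\<Sum>i\<in>{1..n}. \<xi> i \<omega>) < real n * p / 2} \<subseteq> (\<Union>r<m. E r)"
  proof safe
    fix \<omega> assume \<omega>: "\<omega> \<in> space M" and small: "(\<Sum>i\<in>{1..n}. \<xi> i \<omega>) < real n * p / 2"
    show "\<omega> \<in> (\<Union>r<m. E r)"
    proof (rule ccontr)
      assume "\<omega> \<notin> (\<Union>r<m. E r)"
      then have "(\<Sum>r<m. card (C r) * p - q / 2) < (\<Sum>r<m. \<Sum>i\<in>C r. \<xi> i \<omega>)"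
        using \<omega> m(1) by (intro sum_strict_mono) (auto simp: E_def not_le lessThan_empty_iff)
      also have "\<dots> = (\<Sum>i\<in>{1..n}. \<xi> i \<omega>)"
        unfolding C_def by (rule sum_residue_classes[OF m(1)])
      also have "(\<Sum>r<m. card (C r) * p - q / 2) = (\<Sum>r<m. real (card (C r))) * p - m * q / 2"
        by (simp add: sum_subtractf sum_distrib_right)
      also have "\<dots> = real n * p / 2"
        using m real_sum_card_residue_classes[OF m(1), of n] by (simp add: C_def q_def field_simps)
      finally show False
        using small by simp
    qed
  qed
  then have "prob {\<omega>\<in>space M. (\<Sum>i\<in>{1..n}. \<xi> i \<omega>) < real n * p / 2} \<le> prob (\<Union>r<m. E r)"
    using E_sets by (intro finite_measure_mono) auto
  also have "\<dots> \<le> (\<Sum>r<m. prob (E r))"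
    using E_sets by (intro measure_UNION_le) auto
  also have "\<dots> \<le> (\<Sum>r<m. exp (- q / 16))"
  proof (rule sum_mono)
    fix r
    have "prob (E r) \<le> exp (card (C r) * p / 32 - q / 2 / 4)"
      unfolding E_def
    proof (rule prob_sum_indicators_lower_tail)
      show "indep_vars (\<lambda>_. borel) \<xi> (C r)"
        using ind by (simp add: C_def)
      show "\<xi> i \<omega> \<in> {0,1}" if "i \<in> C r" for i \<omega>
        using that by (intro bin) (simp add: C_def)
    qed (use mean p in \<open>auto simp: C_def\<close>)
    also have "\<dots> \<le> exp (- q / 16)"
    proof -
      have "card (C r) * p \<le> 2 * q"
        using mult_right_mono[OF card_residue_class_le[OF m, of r] p] by (simp add: C_def q_def)
      then show ?thesis by simp
    qed
    finally show "prob (E r) \<le> exp (- q / 16)" .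
  qed
  finally show ?thesis by (simp add: q_def)
qed

lemma (in prob_space) prob_sum_indicators_gt_double:
  fixes \<xi> :: "nat \<Rightarrow> 'a \<Rightarrow> real" and p :: real and m n :: nat
  assumes m: "1 \<le> m" "m \<le> n"
    and ind: "\<And>r. indep_vars (\<lambda>_. borel) \<xi> {i\<in>{1..n}. i mod m = r}"
    and bin: "\<And>i \<omega>. i \<in> {1..n} \<Longrightarrow> \<xi> i \<omega> \<in> {0,1}"
    and mean: "\<And>i. i \<in> {1..n} \<Longrightarrow> expectation (\<xi> i) = p" and p: "0 \<le> p"
  shows "prob {\<omega>\<in>space M. 2 * real n * p < (\<Sum>i\<in>{1..n}. \<xi> i \<omega>)}
    \<le> real m * exp (- (real n * p / real m) / 8)"
proof -
  define C where "C r = {i\<in>{1..n}. i mod m = r}" for r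
  define q where "q = real n * p / real m"
  define E where "E r = {\<omega>\<in>space M. card (C r) * p + q \<le> (\<Sum>i\<in>C r. \<xi> i \<omega>)}" for r
  have rv: "\<xi> i \<in> borel_measurable M" if "i \<in> {1..n}" for i
    using ind[of "i mod m"] that unfolding indep_vars_def by auto
  have E_sets: "E r \<in> events" for r
    unfolding E_def C_def by (intro borel_measurable_le borel_measurable_sum rv) auto
  have "{\<omega>\<in>space M. 2 * real n * p < (\<Sum>i\<in>{1..n}. \<xi> i \<omega>)} \<subseteq> (\<Union>r<m. E r)"
  proof safe
    fix \<omega> assume \<omega>: "\<omega> \<in> space M" and large: "2 * real n * p < (\<Sum>i\<in>{1..n}. \<xi> i \<omega>)"
    show "\<omega> \<in> (\<Union>r<m. E r)"
    proof (rule ccontr)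
      assume "\<omega> \<notin> (\<Union>r<m. E r)"
      then have "(\<Sum>r<m. \<Sum>i\<in>C r. \<xi> i \<omega>) < (\<Sum>r<m. card (C r) * p + q)"
        using \<omega> m(1) by (intro sum_strict_mono) (auto simp: E_def not_le lessThan_empty_iff)
      moreover have "(\<Sum>r<m. \<Sum>i\<in>C r. \<xi> i \<omega>) = (\<Sum>i\<in>{1..n}. \<xi> i \<omega>)"
        unfolding C_def by (rule sum_residue_classes[OF m(1)])
      moreover have "(\<Sum>r<m. card (C r) * p + q) = (\<Sum>r<m. real (card (C r))) * p + m * q"
        by (simp add: sum.distrib sum_distrib_right)
      moreover have "\<dots> = 2 * real n * p"
        using m real_sum_card_residue_classes[OF m(1), of n] by (simp add: C_def q_def field_simps)
      ultimately show False
        using large by simp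
    qed
  qed
  then have "prob {\<omega>\<in>space M. 2 * real n * p < (\<Sum>i\<in>{1..n}. \<xi> i \<omega>)} \<le> prob (\<Union>r<m. E r)"
    using E_sets by (intro finite_measure_mono) auto
  also have "\<dots> \<le> (\<Sum>r<m. prob (E r))"
    using E_sets by (intro measure_UNION_le) auto
  also have "\<dots> \<le> (\<Sum>r<m. exp (- q / 8))"
  proof (rule sum_mono)
    fix r
    have "prob (E r) \<le> exp (card (C r) * p / 16 - q / 4)"
      unfolding E_def
    proof (rule prob_sum_indicators_upper_tail)
      show "indep_vars (\<lambda>_. borel) \<xi> (C r)"
        using ind by (simp add: C_def)
      show "\<xi> i \<omega> \<in> {0,1}" if "i \<in> C r" for i \<omega>
        using that by (intro bin) (simp add: C_def)
    qed (use mean p in \<open>auto simp: C_def\<close>)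
    also have "\<dots> \<le> exp (- q / 8)"
    proof -
      have "card (C r) * p \<le> 2 * q"
        using mult_right_mono[OF card_residue_class_le[OF m, of r] p] by (simp add: C_def q_def)
      then show ?thesis by simp
    qed
    finally show "prob (E r) \<le> exp (- q / 8)" .
  qed
  finally show ?thesis by (simp add: q_def)
qed

lemma summable_mult_exp_neg_ratio:
  fixes m :: "nat \<Rightarrow> nat" and q :: "nat \<Rightarrow> real"
  assumes m_le: "\<And>n. 1 \<le> n \<Longrightarrow> m n \<le> n"
    and lim: "filterlim (\<lambda>n. real n * q n / (real (m n) * ln (real n))) at_top sequentially"
  shows "summable (\<lambda>n. real (m n) * exp (- (real n * q n / real (m n)) / 16))"
proof (rule summable_comparison_test_ev[OF _ inverse_power_summable[of 2]])
  have "eventually (\<lambda>n. 48 \<le> real n * q n / (real (m n) * ln (real n))) sequentially"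
    using lim unfolding filterlim_at_top by blast
  then show "eventually (\<lambda>n. norm (real (m n) * exp (- (real n * q n / real (m n)) / 16))
      \<le> inverse (real n ^ 2)) sequentially"
    using eventually_ge_at_top[of "3::nat"]
  proof eventually_elim
    case (elim n)
    define Q where "Q = real n * q n / real (m n)"
    have ln_pos: "0 < ln (real n)"
      using elim by (intro ln_gt_zero) simp
    have m_pos: "0 < real (m n)"
      using elim(1) by (cases "m n = 0") auto
    have "48 * ln (real n) \<le> Q"
      using elim(1) ln_pos m_pos by (simp add: Q_def field_simps)
    then have "exp (- Q / 16) \<le> exp (- (3 * ln (real n)))"
      by simp
    also have "\<dots> = inverse (real n ^ 3)"
      using exp_of_nat_mult[of 3 "ln (real n)"] elim(2) by (simp add: exp_minus)
    finally have "real (m n) * exp (- Q / 16) \<le> real n * inverse (real n ^ 3)"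
      using m_le[of n] elim(2) m_pos by (intro mult_mono) auto
    also have "\<dots> = inverse (real n ^ 2)"
      using elim(2) by (simp add: field_simps power3_eq_cube power2_eq_square)
    finally show ?case by (simp add: Q_def)
  qed
qed simp

lemma (in prob_space) AE_eventually_not_in_of_summable:
  assumes sets: "\<And>n. E n \<in> events"
    and bound: "eventually (\<lambda>n. prob (E n) \<le> b n) sequentially" and b: "summable b"
  shows "AE \<omega> in M. eventually (\<lambda>n. \<omega> \<notin> E n) sequentially"
proof -
  have "AE \<omega> in M. eventually (\<lambda>n. \<omega> \<in> space M - E n) sequentially"
  proof (rule borel_cantelli_AE1[OF sets])
    show "emeasure M (E n) < \<infinity>" for n
      by (simp add: less_top[symmetric])
    show "summable (\<lambda>n. prob (E n))"
      using bound by (intro summable_comparison_test_ev[OF _ b]) (auto elim: eventually_mono)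
  qed
  then show ?thesis
    by eventually_elim (auto elim: eventually_mono)
qed

lemma (in prob_space) AE_eventually_sum_indicators_ge_half:
  fixes \<xi> :: "nat \<Rightarrow> nat \<Rightarrow> 'a \<Rightarrow> real" and p :: "nat \<Rightarrow> real" and m :: "nat \<Rightarrow> nat"
  assumes ind: "\<And>n r. indep_vars (\<lambda>_. borel) (\<xi> n) {i\<in>{1..n}. i mod m n = r}"
    and bin: "\<And>n i \<omega>. i \<in> {1..n} \<Longrightarrow> \<xi> n i \<omega> \<in> {0,1}"
    and mean: "\<And>n i. i \<in> {1..n} \<Longrightarrow> expectation (\<xi> n i) = p n" and p: "\<And>n. 0 \<le> p n"
    and m: "\<And>n. 1 \<le> n \<Longrightarrow> 1 \<le> m n \<and> m n \<le> n"
    and lim: "filterlim (\<lambda>n. real n * p n / (real (m n) * ln (real n))) at_top sequentially"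
  shows "AE \<omega> in M. eventually (\<lambda>n. real n * p n / 2 \<le> (\<Sum>i\<in>{1..n}. \<xi> n i \<omega>)) sequentially"
proof -
  define E where "E n = {\<omega>\<in>space M. (\<Sum>i\<in>{1..n}. \<xi> n i \<omega>) < real n * p n / 2}" for n
  have "AE \<omega> in M. eventually (\<lambda>n. \<omega> \<notin> E n) sequentially"
  proof (rule AE_eventually_not_in_of_summable)
    show "E n \<in> events" for n
      using ind unfolding E_def indep_vars_def by (intro borel_measurable_less borel_measurable_sum) auto
    show "eventually (\<lambda>n. prob (E n) \<le> m n * exp (- (n * p n / m n) / 16)) sequentially"
      using eventually_ge_at_top[of "1::nat"]
    proof eventually_elim
      case (elim n)
      show ?case
        unfolding E_def using m elim by (intro prob_sum_indicators_lt_half ind bin mean p) auto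
    qed
    show "summable (\<lambda>n. m n * exp (- (n * p n / m n) / 16))"
      using m lim by (intro summable_mult_exp_neg_ratio) auto
  qed
  with AE_space show ?thesis
    by eventually_elim (auto elim!: eventually_mono simp: E_def not_less)
qed

lemma (in prob_space) AE_eventually_sum_indicators_le_double:
  fixes \<xi> :: "nat \<Rightarrow> nat \<Rightarrow> 'a \<Rightarrow> real" and p p' :: "nat \<Rightarrow> real" and m :: "nat \<Rightarrow> nat"
  assumes ind: "\<And>n r. indep_vars (\<lambda>_. borel) (\<xi> n) {i\<in>{1..n}. i mod m n = r}"
    and bin: "\<And>n i \<omega>. i \<in> {1..n} \<Longrightarrow> \<xi> n i \<omega> \<in> {0,1}"
    and mean: "\<And>n i. i \<in> {1..n} \<Longrightarrow> expectation (\<xi> n i) = p n" and p: "\<And>n. 0 \<le> p n"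
    and p': "\<And>n. p' n \<le> p n"
    and m: "\<And>n. 1 \<le> n \<Longrightarrow> 1 \<le> m n \<and> m n \<le> n"
    and lim: "filterlim (\<lambda>n. real n * p' n / (real (m n) * ln (real n))) at_top sequentially"
  shows "AE \<omega> in M. eventually (\<lambda>n. (\<Sum>i\<in>{1..n}. \<xi> n i \<omega>) \<le> 2 * real n * p n) sequentially"
proof -
  define E where "E n = {\<omega>\<in>space M. 2 * real n * p n < (\<Sum>i\<in>{1..n}. \<xi> n i \<omega>)}" for n
  have "AE \<omega> in M. eventually (\<lambda>n. \<omega> \<notin> E n) sequentially"
  proof (rule AE_eventually_not_in_of_summable)
    show "E n \<in> events" for n
      using ind unfolding E_def indep_vars_def by (intro borel_measurable_less borel_measurable_sum) auto
    show "eventually (\<lambda>n. prob (E n) \<le> m n * exp (- (n * p' n / m n) / 16)) sequentially"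
      using eventually_ge_at_top[of "1::nat"]
    proof eventually_elim
      case (elim n)
      have "prob (E n) \<le> m n * exp (- (n * p n / m n) / 8)"
        unfolding E_def using m elim by (intro prob_sum_indicators_gt_double ind bin mean p) auto
      also have "\<dots> \<le> m n * exp (- (n * p' n / m n) / 16)"
      proof -
        define A B where "A = real n * p n / m n" and "B = real n * p' n / m n"
        have "B \<le> A" "0 \<le> A"
          using p p' by (auto simp: A_def B_def intro!: divide_right_mono mult_left_mono)
        then have "exp (- A / 8) \<le> exp (- B / 16)"
          by simp
        then show ?thesis
          unfolding A_def B_def by (rule mult_left_mono) simp
      qed
      finally show ?case .
    qed
    show "summable (\<lambda>n. m n * exp (- (n * p' n / m n) / 16))"
      using m lim by (intro summable_mult_exp_neg_ratio) auto
  qed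
  with AE_space show ?thesis
    by eventually_elim (auto elim!: eventually_mono simp: E_def not_less)
qed

section \<open>Tails of the Orlicz norm\<close>

lemma convex_on_mult_le:
  fixes \<psi> :: "real \<Rightarrow> real"
  assumes "convex_on {0..} \<psi>" "\<psi> 0 = 0" "1 \<le> s"
  shows "s * \<psi> 1 \<le> \<psi> s"
proof -
  have "\<psi> ((1 - 1/s) *\<^sub>R 0 + (1/s) *\<^sub>R s) \<le> (1 - 1/s) * \<psi> 0 + (1/s) * \<psi> s"
    using assms by (intro convex_onD[OF assms(1)]) auto
  then show ?thesis
    using assms by (simp add: field_simps)
qed

lemma (in prob_space) orlicz_Markov_inequality:
  fixes \<psi> :: "real \<Rightarrow> real" and Z :: "'a \<Rightarrow> real"
  assumes Z: "Z \<in> borel_measurable M"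
    and mono: "strict_mono_on {0..} \<psi>" and \<psi>0: "\<psi> 0 = 0"
    and c: "0 < c" and moment: "(\<integral>\<^sup>+ \<omega>. ennreal (\<psi> (\<bar>Z \<omega>\<bar> / c)) \<partial>M) \<le> 1" and t: "0 < t"
  shows "prob {\<omega>\<in>space M. t < \<bar>Z \<omega>\<bar>} \<le> 1 / \<psi> (t / c)"
proof -
  have \<psi>_mono: "\<psi> a \<le> \<psi> b" if "0 \<le> a" "a \<le> b" for a b
    using strict_mono_on_leD[OF mono] that by simp
  have \<psi>_pos: "0 < \<psi> (t / c)"
    using strict_mono_onD[OF mono, of 0 "t / c"] \<psi>0 t c by simp
  have "(\<lambda>s. \<psi> (max 0 s)) \<in> borel_measurable borel"
    by (rule borel_measurable_mono) (auto simp: mono_def intro!: \<psi>_mono)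
  then have "(\<lambda>\<omega>. \<psi> (max 0 (\<bar>Z \<omega>\<bar> / c))) \<in> borel_measurable M"
    using Z by measurable
  then have \<psi>Z: "(\<lambda>\<omega>. \<psi> (\<bar>Z \<omega>\<bar> / c)) \<in> borel_measurable M"
    using c by (simp add: max_def)
  have "{\<omega>\<in>space M. t < \<bar>Z \<omega>\<bar>}
      \<subseteq> {\<omega>\<in>space M. 1 \<le> ennreal (1 / \<psi> (t / c)) * ennreal (\<psi> (\<bar>Z \<omega>\<bar> / c))}"
  proof safe
    fix \<omega> assume "\<omega> \<in> space M" "t < \<bar>Z \<omega>\<bar>"
    then have "\<psi> (t / c) \<le> \<psi> (\<bar>Z \<omega>\<bar> / c)"
      using t c by (intro \<psi>_mono) (auto intro: divide_right_mono)
    then have "1 \<le> 1 / \<psi> (t / c) * \<psi> (\<bar>Z \<omega>\<bar> / c)"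
      using \<psi>_pos by (simp add: field_simps)
    then show "1 \<le> ennreal (1 / \<psi> (t / c)) * ennreal (\<psi> (\<bar>Z \<omega>\<bar> / c))"
      using \<psi>_pos by (simp add: ennreal_mult'[symmetric] flip: ennreal_1)
  qed
  then have "emeasure M {\<omega>\<in>space M. t < \<bar>Z \<omega>\<bar>}
      \<le> emeasure M {\<omega>\<in>space M. 1 \<le> ennreal (1 / \<psi> (t / c)) * ennreal (\<psi> (\<bar>Z \<omega>\<bar> / c))}"
    by (rule emeasure_mono) (use \<psi>Z in measurable)
  also have "\<dots> \<le> ennreal (1 / \<psi> (t / c)) * (\<integral>\<^sup>+ \<omega>. ennreal (\<psi> (\<bar>Z \<omega>\<bar> / c)) * indicator (space M) \<omega> \<partial>M)"
    by (rule nn_integral_Markov_inequality) (use \<psi>Z in auto)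
  also have "\<dots> = ennreal (1 / \<psi> (t / c)) * (\<integral>\<^sup>+ \<omega>. ennreal (\<psi> (\<bar>Z \<omega>\<bar> / c)) \<partial>M)"
    by (auto intro!: arg_cong2[where f=times] nn_integral_cong)
  also have "\<dots> \<le> ennreal (1 / \<psi> (t / c))"
    using mult_left_mono[OF moment, of "ennreal (1 / \<psi> (t / c))"] by simp
  finally show ?thesis
    using \<psi>_pos by (simp add: emeasure_eq_measure)
qed

lemma orlicz_norm_nonneg:
  assumes "orlicz_finite M \<psi> Z"
  shows "0 \<le> orlicz_norm M \<psi> Z"
  unfolding orlicz_norm_def using assms unfolding orlicz_finite_def
  by (intro cInf_greatest) auto

lemma (in prob_space) orlicz_tail_bound_above_norm:
  fixes \<psi> :: "real \<Rightarrow> real" and Z :: "'a \<Rightarrow> real"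
  assumes Z: "Z \<in> borel_measurable M" and fin: "orlicz_finite M \<psi> Z"
    and mono: "strict_mono_on {0..} \<psi>" and \<psi>0: "\<psi> 0 = 0"
    and t: "0 < t" and c: "orlicz_norm M \<psi> Z < c"
  shows "prob {\<omega>\<in>space M. t < \<bar>Z \<omega>\<bar>} \<le> 1 / \<psi> (t / c)"
proof -
  define S where "S = {c::real. 0 < c \<and> (\<integral>\<^sup>+ \<omega>. ennreal (\<psi> (\<bar>Z \<omega>\<bar> / c)) \<partial>M) \<le> 1}"
  have S_ne: "S \<noteq> {}"
    using fin unfolding orlicz_finite_def S_def by auto
  have S_up: "c' \<in> S" if "c \<in> S" "c \<le> c'" for c c'
  proof -
    have c: "0 < c"
      using that by (simp add: S_def)
    have "\<psi> (\<bar>Z \<omega>\<bar> / c') \<le> \<psi> (\<bar>Z \<omega>\<bar> / c)" for \<omega>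
      using c that(2) by (intro strict_mono_on_leD[OF mono]) (auto intro: divide_left_mono)
    then have "(\<integral>\<^sup>+ \<omega>. ennreal (\<psi> (\<bar>Z \<omega>\<bar> / c')) \<partial>M) \<le> (\<integral>\<^sup>+ \<omega>. ennreal (\<psi> (\<bar>Z \<omega>\<bar> / c)) \<partial>M)"
      by (intro nn_integral_mono ennreal_leI)
    then show ?thesis
      using that c unfolding S_def by auto
  qed
  have "Inf S < c"
    using c by (simp add: S_def orlicz_norm_def)
  from cInf_lessD[OF S_ne this] obtain c0 where "c0 \<in> S" "c0 < c" ..
  then have "c \<in> S"
    using S_up[of c0 c] by simp
  then have "0 < c" and "(\<integral>\<^sup>+ \<omega>. ennreal (\<psi> (\<bar>Z \<omega>\<bar> / c)) \<partial>M) \<le> 1"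
    unfolding S_def by blast+
  then show ?thesis
    by (rule orlicz_Markov_inequality[OF Z mono \<psi>0 _ _ t])
qed

lemma (in prob_space) orlicz_norm_tail_bound:
  fixes \<psi> :: "real \<Rightarrow> real" and Z :: "'a \<Rightarrow> real"
  assumes Z: "Z \<in> borel_measurable M" and fin: "orlicz_finite M \<psi> Z"
    and convex: "convex_on {0..} \<psi>" and mono: "strict_mono_on {0..} \<psi>" and \<psi>0: "\<psi> 0 = 0"
    and t: "0 < t"
  shows "prob {\<omega>\<in>space M. t < \<bar>Z \<omega>\<bar>} \<le> 1 / \<psi> (t / orlicz_norm M \<psi> Z)"
proof -
  define \<beta> where "\<beta> = orlicz_norm M \<psi> Z"
  let ?p = "prob {\<omega>\<in>space M. t < \<bar>Z \<omega>\<bar>}"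
  have above_norm: "?p \<le> 1 / \<psi> (t / c)" if "\<beta> < c" for c
    using orlicz_tail_bound_above_norm[OF Z fin mono \<psi>0 t] that by (simp add: \<beta>_def)
  have \<psi>_pos: "0 < \<psi> s" if "0 < s" for s
    using strict_mono_onD[OF mono, of 0 s] that \<psi>0 by simp
  consider "\<beta> = 0" | "0 < \<beta>"
    using orlicz_norm_nonneg[OF fin] unfolding \<beta>_def by linarith
  then show ?thesis
  proof cases
    case 1
    text \<open>Here the claimed bound is \<open>1 / \<psi> (t / 0) = 0\<close>: the tail probability is at most
      \<open>1 / \<psi> s \<le> 1 / (s * \<psi> 1)\<close> for every \<open>s \<ge> 1\<close>.\<close>
    have "?p \<le> 0"
    proof (rule ccontr)
      assume "\<not> ?p \<le> 0"
      then have p: "0 < ?p" by simp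
      define s where "s = max 1 (2 / (?p * \<psi> 1))"
      have s: "1 \<le> s" "2 / (?p * \<psi> 1) \<le> s"
        unfolding s_def by auto
      have "?p \<le> 1 / \<psi> (t / (t / s))"
        using above_norm[of "t / s"] 1 t s by simp
      also have "\<dots> = 1 / \<psi> s"
        using t by simp
      also have "\<dots> \<le> 1 / (s * \<psi> 1)"
        using convex_on_mult_le[OF convex \<psi>0 s(1)] \<psi>_pos[of 1] \<psi>_pos[of s] s(1)
        by (intro divide_left_mono mult_pos_pos) auto
      also have "\<dots> \<le> ?p / 2"
        using s p \<psi>_pos[of 1] by (simp add: field_simps)
      finally show False
        using p by simp
    qed
    then show ?thesis
      using 1 \<psi>0 by (simp add: \<beta>_def)
  next
    case 2
    have "((\<lambda>c. t / c) \<longlongrightarrow> t / \<beta>) (at_right \<beta>)"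
      using 2 by (intro tendsto_intros) auto
    moreover have "isCont \<psi> (t / \<beta>)"
    proof (rule continuous_on_interior)
      show "continuous_on {0<..} \<psi>"
        by (rule convex_on_continuous[OF open_greaterThan convex_on_subset[OF convex]]) auto
    qed (use 2 t in \<open>simp add: interior_open\<close>)
    ultimately have "((\<lambda>c. \<psi> (t / c)) \<longlongrightarrow> \<psi> (t / \<beta>)) (at_right \<beta>)"
      using isCont_tendsto_compose by blast
    then have "((\<lambda>c. 1 / \<psi> (t / c)) \<longlongrightarrow> 1 / \<psi> (t / \<beta>)) (at_right \<beta>)"
      using 2 t \<psi>_pos[of "t / \<beta>"] by (intro tendsto_intros) auto
    moreover have "eventually (\<lambda>c. ?p \<le> 1 / \<psi> (t / c)) (at_right \<beta>)"
      using above_norm by (auto simp: eventually_at_right_field intro: exI[of _ "\<beta> + 1"])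
    ultimately show ?thesis
      unfolding \<beta>_def by (rule tendsto_lowerbound) simp
  qed
qed

section \<open>Independent identically distributed families\<close>

lemma measurable_reindex_PiM:
  assumes "\<And>j. u j \<in> K"
  shows "(\<lambda>f j. f (u j)) \<in> measurable (PiM K (\<lambda>_. N)) (PiM UNIV (\<lambda>_. N))"
  by (rule measurable_PiM_single')
     (use assms in \<open>auto intro: measurable_component_singleton simp: space_PiM PiE_iff\<close>)

lemma (in prob_space) measurable_reindex_family:
  assumes "\<And>s. A s \<in> measurable M N"
  shows "(\<lambda>\<omega> j. A (u j) \<omega>) \<in> measurable M (PiM UNIV (\<lambda>_. N))"
  by (rule measurable_PiM_single') (use assms measurable_space[OF assms] in auto)

lemma (in prob_space) distr_reindex_iid:
  fixes A :: "'s \<Rightarrow> 'a \<Rightarrow> 'b" and u :: "'i \<Rightarrow> 's"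
  assumes ind: "indep_vars (\<lambda>_. N) A UNIV" and ident: "\<And>s. distr M N (A s) = D" and "inj u"
  shows "distr M (PiM UNIV (\<lambda>_. N)) (\<lambda>\<omega> j. A (u j) \<omega>) = PiM UNIV (\<lambda>_. D)"
proof -
  have rv: "A s \<in> measurable M N" for s
    using ind unfolding indep_vars_def by blast
  have "indep_vars (\<lambda>_. N) (\<lambda>j \<omega>. (\<lambda>f. f (u j)) (restrict (\<lambda>s. A s \<omega>) {u j})) UNIV"
    by (rule indep_vars_compose2[OF indep_vars_restrict[OF ind]])
       (use \<open>inj u\<close> in \<open>auto simp: disjoint_family_on_def inj_def intro: measurable_component_singleton\<close>)
  then have "indep_vars (\<lambda>_. N) (\<lambda>j. A (u j)) UNIV"
    by simp
  then have "distr M (PiM UNIV (\<lambda>_. N)) (\<lambda>\<omega>. \<lambda>j\<in>UNIV. A (u j) \<omega>) = PiM UNIV (\<lambda>j. distr M N (A (u j)))"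
    using indep_vars_iff_distr_eq_PiM[where I=UNIV and M'="\<lambda>_. N" and X="\<lambda>j. A (u j)"] rv
    by simp
  then show ?thesis
    by (simp add: ident restrict_def)
qed

lemma (in prob_space) distr_reindex_iid_eq:
  fixes A :: "'s \<Rightarrow> 'a \<Rightarrow> 'b" and u v :: "'i \<Rightarrow> 's"
  assumes ind: "indep_vars (\<lambda>_. N) A UNIV" and ident: "\<And>s. distr M N (A s) = D"
    and "inj u" "inj v" and \<Phi>: "\<Phi> \<in> measurable (PiM UNIV (\<lambda>_. N)) F"
  shows "distr M F (\<lambda>\<omega>. \<Phi> (\<lambda>j. A (u j) \<omega>)) = distr M F (\<lambda>\<omega>. \<Phi> (\<lambda>j. A (v j) \<omega>))"
proof -
  have rv: "A s \<in> measurable M N" for s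
    using ind unfolding indep_vars_def by blast
  have "distr M F (\<lambda>\<omega>. \<Phi> (\<lambda>j. A (w j) \<omega>)) = distr (PiM UNIV (\<lambda>_. D)) F \<Phi>" if "inj w" for w
    using distr_distr[OF \<Phi> measurable_reindex_family[where A=A and u=w, OF rv]]
    by (simp add: distr_reindex_iid[OF ind ident that] comp_def)
  then show ?thesis
    using assms by simp
qed

lemma (in prob_space) indep_vars_functionals_disjoint:
  fixes A :: "'s \<Rightarrow> 'a \<Rightarrow> 'b" and u :: "'i \<Rightarrow> 'j \<Rightarrow> 's"
  assumes ind: "indep_vars (\<lambda>_. N) A UNIV"
    and \<Phi>: "\<And>i. i \<in> I \<Longrightarrow> \<Phi> i \<in> measurable (PiM UNIV (\<lambda>_. N)) (F i)"
    and disj: "disjoint_family_on (\<lambda>i. range (u i)) I"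
  shows "indep_vars F (\<lambda>i \<omega>. \<Phi> i (\<lambda>j. A (u i j) \<omega>)) I"
proof -
  have "indep_vars F (\<lambda>i \<omega>. (\<lambda>f. \<Phi> i (\<lambda>j. f (u i j))) (restrict (\<lambda>s. A s \<omega>) (range (u i)))) I"
  proof (rule indep_vars_compose2[OF indep_vars_restrict[OF ind _ disj]])
    show "(\<lambda>f. \<Phi> i (\<lambda>j. f (u i j))) \<in> measurable (PiM (range (u i)) (\<lambda>_. N)) (F i)" if "i \<in> I" for i
      using measurable_reindex_PiM[of "u i" "range (u i)" N] \<Phi>[OF that] by measurable
  qed simp
  then show ?thesis
    by simp
qed

lemma (in prob_space) AE_eventually_all_not_in_of_summable:
  assumes sets: "\<And>n i. E n i \<in> events"
    and bound: "\<And>n i. i \<in> {1..n} \<Longrightarrow> prob (E n i) \<le> a n"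
    and summable: "summable (\<lambda>n. real n * a n)"
  shows "AE \<omega> in M. eventually (\<lambda>n. \<forall>i\<in>{1..n}. \<omega> \<notin> E n i) sequentially"
proof -
  have "AE \<omega> in M. eventually (\<lambda>n. \<omega> \<notin> (\<Union>i\<in>{1..n}. E n i)) sequentially"
  proof (rule AE_eventually_not_in_of_summable[OF _ always_eventually summable])
    show "(\<Union>i\<in>{1..n}. E n i) \<in> events" for n
      using sets by auto
    show "\<forall>n. prob (\<Union>i\<in>{1..n}. E n i) \<le> real n * a n"
    proof
      fix n
      have "prob (\<Union>i\<in>{1..n}. E n i) \<le> (\<Sum>i\<in>{1..n}. prob (E n i))"
        using sets by (intro measure_UNION_le) auto
      also have "\<dots> \<le> (\<Sum>i\<in>{1..n}. a n)"
        using bound by (rule sum_mono)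
      finally show "prob (\<Union>i\<in>{1..n}. E n i) \<le> real n * a n"
        by simp
    qed
  qed
  then show ?thesis
    by simp
qed

lemma card_ball_le_of_close:
  fixes d :: "'f \<Rightarrow> 'f \<Rightarrow> real"
  assumes semi: "semimetric_on S d" and x: "x \<in> S" and "finite I"
    and close: "\<And>i. i \<in> I \<Longrightarrow> X i \<in> S \<and> Y i \<in> S \<and> d (X i) (Y i) \<le> \<delta>"
  shows "card {i\<in>I. d (Y i) x \<le> r} \<le> card {i\<in>I. d (X i) x \<le> r + \<delta>}"
    and "card {i\<in>I. d (X i) x \<le> r} \<le> card {i\<in>I. d (Y i) x \<le> r + \<delta>}"
proof -
  have tri: "d a x \<le> d a b + d b x" if "a \<in> S" "b \<in> S" for a b
    using semi x that unfolding semimetric_on_def by blast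
  have sym: "d a b = d b a" if "a \<in> S" "b \<in> S" for a b
    using semi that unfolding semimetric_on_def by blast
  show "card {i\<in>I. d (Y i) x \<le> r} \<le> card {i\<in>I. d (X i) x \<le> r + \<delta>}"
    using \<open>finite I\<close> close tri by (intro card_mono) (auto, smt (verit))
  show "card {i\<in>I. d (X i) x \<le> r} \<le> card {i\<in>I. d (Y i) x \<le> r + \<delta>}"
    using \<open>finite I\<close> close tri sym by (intro card_mono) (auto, smt (verit))
qed

section \<open>The coupled approximations of a Bernoulli shift\<close>

lemma residue_class_distance:
  fixes i i' m :: nat
  assumes "i mod m = i' mod m" "i < i'"
  shows "m \<le> i' - i"
proof -
  have "m dvd i' - i"
    using assms mod_eq_dvd_iff_nat[of i i' m] by simp
  then show ?thesis
    using assms by (intro dvd_imp_le) auto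
qed

definition fresh_index :: "int \<Rightarrow> nat \<Rightarrow> int" where
  "fresh_index i j = int (prod_encode (int_encode i, j))"

lemma fresh_index_eq_iff: "fresh_index i j = fresh_index i' j' \<longleftrightarrow> i = i' \<and> j = j'"
  by (simp add: fresh_index_def int_encode_eq)

locale bernoulli_shift = prob_space M
  for M :: "'w measure" +
  fixes N :: "'b measure" and F :: "'f measure" and g :: "(nat \<Rightarrow> 'b) \<Rightarrow> 'f"
    and \<alpha> \<alpha>' :: "int \<Rightarrow> 'w \<Rightarrow> 'b" and X :: "int \<Rightarrow> 'w \<Rightarrow> 'f" and Xm :: "nat \<Rightarrow> 'w \<Rightarrow> 'f"
  assumes g_measurable: "g \<in> measurable (PiM UNIV (\<lambda>_. N)) F"
    and indep_innovations: "indep_vars (\<lambda>_. N) (\<lambda>s. case s of Inl j \<Rightarrow> \<alpha> j | Inr j \<Rightarrow> \<alpha>' j) UNIV"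
    and ident: "\<And>j. distr M N (\<alpha> j) = distr M N (\<alpha> 0)"
    and ident': "\<And>j. distr M N (\<alpha>' j) = distr M N (\<alpha> 0)"
    and X_def: "\<And>i \<omega>. X i \<omega> = g (\<lambda>j. \<alpha> (i - int j) \<omega>)"
    and Xm_def: "\<And>mm \<omega>. Xm mm \<omega> = g (\<lambda>j. if j < mm then \<alpha> (1 - int j) \<omega> else \<alpha>' (1 - int j) \<omega>)"
begin

definition innovation :: "int + int \<Rightarrow> 'w \<Rightarrow> 'b" where
  "innovation s = (case s of Inl j \<Rightarrow> \<alpha> j | Inr j \<Rightarrow> \<alpha>' j)"

text \<open>\<open>coupled mm i\<close> is the \<open>mm\<close>-approximation of \<open>X i\<close>; unlike \<open>Xm\<close>, it replaces the
  innovations beyond lag \<open>mm\<close> by copies that are fresh for every \<open>i\<close>, so that coupled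
  variables whose indices are \<open>mm\<close> apart are independent.\<close>

definition coupled_index :: "nat \<Rightarrow> int \<Rightarrow> nat \<Rightarrow> int + int" where
  "coupled_index mm i j = (if j < mm then Inl (i - int j) else Inr (fresh_index i j))"

definition coupled :: "nat \<Rightarrow> int \<Rightarrow> 'w \<Rightarrow> 'f" where
  "coupled mm i \<omega> = g (\<lambda>j. innovation (coupled_index mm i j) \<omega>)"

lemma innovation_simps [simp]:
  "innovation (Inl j) = \<alpha> j" "innovation (Inr j) = \<alpha>' j"
  by (simp_all add: innovation_def)

lemma innovation_if:
  "innovation (if c then s else s') \<omega> = (if c then innovation s \<omega> else innovation s' \<omega>)"
  by simp

lemma indep_innovation: "indep_vars (\<lambda>_. N) innovation UNIV"
  using indep_innovations by (simp add: innovation_def[abs_def])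

lemma distr_innovation: "distr M N (innovation s) = distr M N (\<alpha> 0)"
  using ident ident' by (cases s) (simp_all only: innovation_def sum.case)

lemma measurable_innovation_functional:
  "(\<lambda>\<omega>. g (\<lambda>j. innovation (u j) \<omega>)) \<in> measurable M F"
proof (rule measurable_compose[OF measurable_reindex_family g_measurable])
  show "innovation s \<in> measurable M N" for s
    using indep_innovation unfolding indep_vars_def by blast
qed

lemma X_eq_innovation_functional: "X i = (\<lambda>\<omega>. g (\<lambda>j. innovation (Inl (i - int j)) \<omega>))"
  by (simp add: fun_eq_iff X_def)

lemma Xm_eq_innovation_functional:
  "Xm mm = (\<lambda>\<omega>. g (\<lambda>j. innovation (if j < mm then Inl (1 - int j) else Inr (1 - int j)) \<omega>))"
  by (simp add: fun_eq_iff Xm_def innovation_if cong: if_cong)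

lemma measurable_X: "X i \<in> measurable M F"
  unfolding X_eq_innovation_functional by (rule measurable_innovation_functional)

lemma measurable_Xm: "Xm mm \<in> measurable M F"
  unfolding Xm_eq_innovation_functional by (rule measurable_innovation_functional)

lemma measurable_coupled: "coupled mm i \<in> measurable M F"
  unfolding coupled_def[abs_def] by (rule measurable_innovation_functional)

lemma distr_X_coupled:
  "distr M (F \<Otimes>\<^sub>M F) (\<lambda>\<omega>. (X i \<omega>, coupled mm i \<omega>)) = distr M (F \<Otimes>\<^sub>M F) (\<lambda>\<omega>. (X 1 \<omega>, Xm mm \<omega>))"
proof -
  define v :: "nat \<Rightarrow> nat + nat" where "v j = (if j < mm then Inl j else Inr j)" for j
  define pair :: "(nat + nat \<Rightarrow> 'b) \<Rightarrow> 'f \<times> 'f" where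
    "pair w = (g (\<lambda>j. w (Inl j)), g (\<lambda>j. w (v j)))" for w
  define lag :: "nat + nat \<Rightarrow> int + int" where
    "lag = (\<lambda>s. case s of Inl j \<Rightarrow> Inl (i - int j) | Inr j \<Rightarrow> Inr (fresh_index i j))"
  define lag1 :: "nat + nat \<Rightarrow> int + int" where
    "lag1 = (\<lambda>s. case s of Inl j \<Rightarrow> Inl (1 - int j) | Inr j \<Rightarrow> Inr (1 - int j))"
  have "pair \<in> measurable (PiM UNIV (\<lambda>_. N)) (F \<Otimes>\<^sub>M F)"
    unfolding pair_def
    by (intro measurable_Pair measurable_compose[OF measurable_reindex_PiM g_measurable]) simp_all
  moreover have "inj lag" "inj lag1"
    by (auto simp: inj_def lag_def lag1_def fresh_index_eq_iff split: sum.splits)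
  ultimately have "distr M (F \<Otimes>\<^sub>M F) (\<lambda>\<omega>. pair (\<lambda>s. innovation (lag s) \<omega>))
      = distr M (F \<Otimes>\<^sub>M F) (\<lambda>\<omega>. pair (\<lambda>s. innovation (lag1 s) \<omega>))"
    by (intro distr_reindex_iid_eq[OF indep_innovation distr_innovation])
  moreover have "lag (v j) = coupled_index mm i j" "lag1 (v j) = (if j < mm then Inl (1 - int j) else Inr (1 - int j))" for j
    by (simp_all add: lag_def lag1_def v_def coupled_index_def)
  then have "(\<lambda>\<omega>. pair (\<lambda>s. innovation (lag s) \<omega>)) = (\<lambda>\<omega>. (X i \<omega>, coupled mm i \<omega>))"
    and "(\<lambda>\<omega>. pair (\<lambda>s. innovation (lag1 s) \<omega>)) = (\<lambda>\<omega>. (X 1 \<omega>, Xm mm \<omega>))"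
    by (simp_all add: fun_eq_iff pair_def lag_def lag1_def X_eq_innovation_functional
        Xm_eq_innovation_functional coupled_def)
  ultimately show ?thesis
    by simp
qed

lemma distr_coupled: "distr M F (coupled mm i) = distr M F (X 1)"
proof -
  have "inj (coupled_index mm i)" "inj (\<lambda>j. Inl (1 - int j) :: int + int)"
    by (auto simp: inj_def coupled_index_def fresh_index_eq_iff split: if_splits)
  then show ?thesis
    unfolding X_eq_innovation_functional coupled_def[abs_def]
    by (rule distr_reindex_iid_eq[OF indep_innovation distr_innovation _ _ g_measurable])
qed

lemma indep_coupled_residue_class:
  "indep_vars (\<lambda>_. F) (\<lambda>i. coupled mm (int i)) {i. i mod mm = r}"
proof -
  have "disjoint_family_on (\<lambda>i. range (coupled_index mm (int i))) {i. i mod mm = r}"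
    unfolding disjoint_family_on_def
  proof (intro ballI impI)
    fix i i' assume "i \<in> {i. i mod mm = r}" "i' \<in> {i. i mod mm = r}" "i \<noteq> i'"
    then have far: "int mm \<le> \<bar>int i - int i'\<bar>"
      using residue_class_distance[of i mm i'] residue_class_distance[of i' mm i]
      by (cases "i < i'") auto
    show "range (coupled_index mm (int i)) \<inter> range (coupled_index mm (int i')) = {}"
      using far \<open>i \<noteq> i'\<close> by (auto simp: coupled_index_def fresh_index_eq_iff split: if_splits)
  qed
  then show ?thesis
    unfolding coupled_def[abs_def]
    by (rule indep_vars_functionals_disjoint[OF indep_innovation g_measurable])
qed

end

lemma real_card_filter_eq_sum:
  "finite S \<Longrightarrow> real (card {i\<in>S. P i}) = (\<Sum>i\<in>S. if P i then 1 else 0)"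
  by (simp add: sum.inter_filter[symmetric])

lemma measurable_dist_point:
  fixes d :: "'f \<Rightarrow> 'f \<Rightarrow> real"
  assumes "(\<lambda>p. d (fst p) (snd p)) \<in> borel_measurable (F \<Otimes>\<^sub>M F)" and "x \<in> space F"
  shows "(\<lambda>y. d y x) \<in> borel_measurable F"
  using measurable_compose[OF measurable_Pair[OF measurable_ident_sets[OF refl] measurable_const] assms(1)]
    assms(2) by simp

context bernoulli_shift
begin

lemma prob_dist_X_coupled_gt:
  fixes d :: "'f \<Rightarrow> 'f \<Rightarrow> real"
  assumes d_meas: "(\<lambda>p. d (fst p) (snd p)) \<in> borel_measurable (F \<Otimes>\<^sub>M F)"
  shows "prob {\<omega>\<in>space M. t < d (X i \<omega>) (coupled mm i \<omega>)} = prob {\<omega>\<in>space M. t < d (X 1 \<omega>) (Xm mm \<omega>)}"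
proof -
  define D where "D = {p\<in>space (F \<Otimes>\<^sub>M F). t < d (fst p) (snd p)}"
  have D: "D \<in> sets (F \<Otimes>\<^sub>M F)"
    unfolding D_def by (rule borel_measurable_less[OF borel_measurable_const d_meas])
  have "prob {\<omega>\<in>space M. t < d (U \<omega>) (V \<omega>)} = measure (distr M (F \<Otimes>\<^sub>M F) (\<lambda>\<omega>. (U \<omega>, V \<omega>))) D"
    if "U \<in> measurable M F" "V \<in> measurable M F" for U V
    using that D measurable_space[OF that(1)] measurable_space[OF that(2)]
    by (subst measure_distr) (auto simp: D_def space_pair_measure intro!: arg_cong[where f=prob])
  then show ?thesis
    by (simp add: measurable_X measurable_Xm measurable_coupled distr_X_coupled)
qed

lemma AE_eventually_coupled_close:
  fixes d :: "'f \<Rightarrow> 'f \<Rightarrow> real" and \<psi> :: "real \<Rightarrow> real" and \<beta> \<delta> :: "nat \<Rightarrow> real"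
    and m :: "nat \<Rightarrow> nat"
  assumes d_meas: "(\<lambda>p. d (fst p) (snd p)) \<in> borel_measurable (F \<Otimes>\<^sub>M F)"
    and convex: "convex_on {0..} \<psi>" and mono: "strict_mono_on {0..} \<psi>" and \<psi>0: "\<psi> 0 = 0"
    and \<beta>_def: "\<And>mm. \<beta> mm = orlicz_norm M \<psi> (\<lambda>\<omega>. d (X 1 \<omega>) (Xm mm \<omega>))"
    and \<beta>_finite: "\<And>mm. 1 \<le> mm \<Longrightarrow> orlicz_finite M \<psi> (\<lambda>\<omega>. d (X 1 \<omega>) (Xm mm \<omega>))"
    and m: "\<And>n. 1 \<le> n \<Longrightarrow> 1 \<le> m n" and \<delta>: "\<And>n. 0 < \<delta> n"
    and summable: "summable (\<lambda>n. real n / \<psi> (\<delta> n / \<beta> (m n)))"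
  shows "AE \<omega> in M. eventually (\<lambda>n. \<forall>i\<in>{1..n}.
      d (X (int i) \<omega>) (coupled (m n) (int i) \<omega>) \<le> \<delta> n) sequentially"
proof -
  have dist_meas: "(\<lambda>\<omega>. d (U \<omega>) (V \<omega>)) \<in> borel_measurable M"
    if "U \<in> measurable M F" "V \<in> measurable M F" for U V
    using measurable_compose[OF measurable_Pair[OF that] d_meas] by simp
  define E where "E n i = {\<omega>\<in>space M. \<delta> n < d (X (int i) \<omega>) (coupled (m n) (int i) \<omega>)}" for n i
  have "AE \<omega> in M. eventually (\<lambda>n. \<forall>i\<in>{1..n}. \<omega> \<notin> E n i) sequentially"
  proof (rule AE_eventually_all_not_in_of_summable)
    show "E n i \<in> events" for n i
      unfolding E_def
      by (intro borel_measurable_less borel_measurable_const dist_meas measurable_X measurable_coupled)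
    show "prob (E n i) \<le> 1 / \<psi> (\<delta> n / \<beta> (m n))" if "i \<in> {1..n}" for n i
    proof -
      let ?Z = "\<lambda>\<omega>. d (X 1 \<omega>) (Xm (m n) \<omega>)"
      have Z: "?Z \<in> borel_measurable M"
        by (intro dist_meas measurable_X measurable_Xm)
      have "prob (E n i) = prob {\<omega>\<in>space M. \<delta> n < ?Z \<omega>}"
        unfolding E_def by (rule prob_dist_X_coupled_gt[OF d_meas])
      also have "\<dots> \<le> prob {\<omega>\<in>space M. \<delta> n < \<bar>?Z \<omega>\<bar>}"
        using Z by (intro finite_measure_mono) auto
      also have "\<dots> \<le> 1 / \<psi> (\<delta> n / \<beta> (m n))"
        unfolding \<beta>_def using m that
        by (intro orlicz_norm_tail_bound[OF Z \<beta>_finite convex mono \<psi>0 \<delta>]) auto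
      finally show ?thesis .
    qed
    show "summable (\<lambda>n. real n * (1 / \<psi> (\<delta> n / \<beta> (m n))))"
      using summable by simp
  qed
  with AE_space show ?thesis
    by eventually_elim (auto elim!: eventually_mono simp: E_def not_less)
qed

lemma card_balls_coupled_close:
  fixes d :: "'f \<Rightarrow> 'f \<Rightarrow> real"
  assumes semi: "semimetric_on (space F) d" and x: "x \<in> space F" and \<omega>: "\<omega> \<in> space M"
    and close: "\<forall>i\<in>{1..n}. d (X (int i) \<omega>) (coupled mm (int i) \<omega>) \<le> \<delta>"
  shows "card {i\<in>{1..n}. d (coupled mm (int i) \<omega>) x \<le> r} \<le> card {i\<in>{1..n}. d (X (int i) \<omega>) x \<le> r + \<delta>}"
    and "card {i\<in>{1..n}. d (X (int i) \<omega>) x \<le> r} \<le> card {i\<in>{1..n}. d (coupled mm (int i) \<omega>) x \<le> r + \<delta>}"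
  using card_ball_le_of_close[OF semi x finite_atLeastAtMost,
      where X="\<lambda>i. X (int i) \<omega>" and Y="\<lambda>i. coupled mm (int i) \<omega>"]
    close measurable_space[OF measurable_X \<omega>] measurable_space[OF measurable_coupled \<omega>]
  by auto

lemma indep_coupled_ball_indicators:
  fixes d :: "'f \<Rightarrow> 'f \<Rightarrow> real"
  assumes dx: "(\<lambda>y. d y x) \<in> borel_measurable F"
  shows "indep_vars (\<lambda>_. borel) (\<lambda>i \<omega>. if d (coupled mm (int i) \<omega>) x \<le> h then 1 else 0 :: real)
    {i\<in>{1..n}. i mod mm = r}"
proof -
  note dx[measurable]
  have "indep_vars (\<lambda>_. borel) (\<lambda>i \<omega>. (\<lambda>y. if d y x \<le> h then 1 else 0 :: real) (coupled mm (int i) \<omega>))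
      {i. i mod mm = r}"
    by (rule indep_vars_compose2[OF indep_coupled_residue_class]) measurable
  then show ?thesis
    by (rule indep_vars_subset) auto
qed

lemma expectation_coupled_ball_indicator:
  fixes d :: "'f \<Rightarrow> 'f \<Rightarrow> real"
  assumes dx: "(\<lambda>y. d y x) \<in> borel_measurable F"
  shows "expectation (\<lambda>\<omega>. if d (coupled mm i \<omega>) x \<le> h then 1 else 0 :: real)
    = prob {\<omega>\<in>space M. d (X 1 \<omega>) x \<le> h}"
proof -
  define B where "B = {y\<in>space F. d y x \<le> h}"
  have B: "B \<in> sets F"
    unfolding B_def by (rule borel_measurable_le[OF dx borel_measurable_const])
  have law: "prob {\<omega>\<in>space M. d (U \<omega>) x \<le> h} = measure (distr M F U) B"
    if "U \<in> measurable M F" for U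
    using that B measurable_space[OF that]
    by (subst measure_distr) (auto simp: B_def intro!: arg_cong[where f=prob])
  have "(\<lambda>\<omega>. if d (coupled mm i \<omega>) x \<le> h then 1 else 0 :: real)
      = indicator {\<omega>. d (coupled mm i \<omega>) x \<le> h}"
    by (auto simp: fun_eq_iff indicator_def)
  then have "expectation (\<lambda>\<omega>. if d (coupled mm i \<omega>) x \<le> h then 1 else 0 :: real)
      = prob {\<omega>\<in>space M. d (coupled mm i \<omega>) x \<le> h}"
    by (simp add: Int_def conj_commute)
  then show ?thesis
    by (simp add: law measurable_coupled measurable_X distr_coupled)
qed

lemma AE_eventually_card_coupled_ball_ge:
  fixes d :: "'f \<Rightarrow> 'f \<Rightarrow> real" and \<phi> :: "real \<Rightarrow> real" and r :: "nat \<Rightarrow> real"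
    and m :: "nat \<Rightarrow> nat"
  assumes dx: "(\<lambda>y. d y x) \<in> borel_measurable F"
    and \<phi>_def: "\<And>h. \<phi> h = prob {\<omega>\<in>space M. d (X 1 \<omega>) x \<le> h}"
    and m: "\<And>n. 1 \<le> n \<Longrightarrow> 1 \<le> m n \<and> m n \<le> n"
    and lim: "filterlim (\<lambda>n. real n * \<phi> (r n) / (real (m n) * ln (real n))) at_top sequentially"
  shows "AE \<omega> in M. eventually (\<lambda>n.
      real n * \<phi> (r n) / 2 \<le> card {i\<in>{1..n}. d (coupled (m n) (int i) \<omega>) x \<le> r n}) sequentially"
proof -
  have "AE \<omega> in M. eventually (\<lambda>n. real n * \<phi> (r n) / 2
      \<le> (\<Sum>i\<in>{1..n}. if d (coupled (m n) (int i) \<omega>) x \<le> r n then 1 else 0)) sequentially"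
    by (rule AE_eventually_sum_indicators_ge_half[OF indep_coupled_ball_indicators[where d=d and x=x, OF dx] _ _ _ m lim])
       (simp_all add: expectation_coupled_ball_indicator[where d=d and x=x, OF dx] \<phi>_def)
  then show ?thesis
    by (simp only: real_card_filter_eq_sum[OF finite_atLeastAtMost])
qed

lemma AE_eventually_card_coupled_ball_le:
  fixes d :: "'f \<Rightarrow> 'f \<Rightarrow> real" and \<phi> :: "real \<Rightarrow> real" and r r' :: "nat \<Rightarrow> real"
    and m :: "nat \<Rightarrow> nat"
  assumes dx: "(\<lambda>y. d y x) \<in> borel_measurable F"
    and \<phi>_def: "\<And>h. \<phi> h = prob {\<omega>\<in>space M. d (X 1 \<omega>) x \<le> h}"
    and m: "\<And>n. 1 \<le> n \<Longrightarrow> 1 \<le> m n \<and> m n \<le> n"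
    and r': "\<And>n. r' n \<le> r n"
    and lim: "filterlim (\<lambda>n. real n * \<phi> (r' n) / (real (m n) * ln (real n))) at_top sequentially"
  shows "AE \<omega> in M. eventually (\<lambda>n.
      card {i\<in>{1..n}. d (coupled (m n) (int i) \<omega>) x \<le> r n} \<le> 2 * real n * \<phi> (r n)) sequentially"
proof -
  have "\<phi> (r' n) \<le> \<phi> (r n)" for n
    unfolding \<phi>_def using r'[of n]
    by (intro finite_measure_mono borel_measurable_le borel_measurable_const
        measurable_compose[OF measurable_X dx]) auto
  then have "AE \<omega> in M. eventually (\<lambda>n.
      (\<Sum>i\<in>{1..n}. if d (coupled (m n) (int i) \<omega>) x \<le> r n then 1 else 0) \<le> 2 * real n * \<phi> (r n))
      sequentially"
    by (intro AE_eventually_sum_indicators_le_double[OF indep_coupled_ball_indicators[where d=d and x=x, OF dx] _ _ _ _ m lim])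
       (simp_all add: expectation_coupled_ball_indicator[where d=d and x=x, OF dx] \<phi>_def)
  then show ?thesis
    by (simp only: real_card_filter_eq_sum[OF finite_atLeastAtMost])
qed

end

theorem proposition4:
  fixes M :: "'w measure" and N :: "'b measure" and F :: "'f measure"
    and d :: "'f \<Rightarrow> 'f \<Rightarrow> real" and x :: 'f
    and g :: "(nat \<Rightarrow> 'b) \<Rightarrow> 'f"
    and \<alpha> \<alpha>' :: "int \<Rightarrow> 'w \<Rightarrow> 'b"
    and \<psi> :: "real \<Rightarrow> real"
    and H H' H'' :: "nat \<Rightarrow> real" and m :: "nat \<Rightarrow> nat"
    and X :: "int \<Rightarrow> 'w \<Rightarrow> 'f" and Xm :: "nat \<Rightarrow> 'w \<Rightarrow> 'f"
    and \<beta> :: "nat \<Rightarrow> real" and \<phi> :: "real \<Rightarrow> real" and k :: "nat \<Rightarrow> 'w \<Rightarrow> nat"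
  assumes P: "prob_space M"
    and semi: "semimetric_on (space F) d"
    and d_meas: "(\<lambda>p. d (fst p) (snd p)) \<in> borel_measurable (F \<Otimes>\<^sub>M F)"
    and x_in: "x \<in> space F"
    and g_meas: "g \<in> measurable (Pi\<^sub>M UNIV (\<lambda>_. N)) F"
    and \<alpha>_meas: "\<And>j. \<alpha> j \<in> measurable M N"
    and \<alpha>'_meas: "\<And>j. \<alpha>' j \<in> measurable M N"
    and indep: "prob_space.indep_vars M (\<lambda>_. N)
                  (\<lambda>s. case s of Inl j \<Rightarrow> \<alpha> j | Inr j \<Rightarrow> \<alpha>' j) UNIV"
    and ident: "\<And>j. distr M N (\<alpha> j) = distr M N (\<alpha> 0)"
    and ident': "\<And>j. distr M N (\<alpha>' j) = distr M N (\<alpha> 0)"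
    and X_def: "\<And>i \<omega>. X i \<omega> = g (\<lambda>j. \<alpha> (i - int j) \<omega>)"
    and Xm_def: "\<And>mm \<omega>. Xm mm \<omega> =
                   g (\<lambda>j. if j < mm then \<alpha> (1 - int j) \<omega> else \<alpha>' (1 - int j) \<omega>)"
    and \<psi>_convex: "convex_on {0..} \<psi>"
    and \<psi>_incr: "strict_mono_on {0..} \<psi>"
    and \<psi>0: "\<psi> 0 = 0"
    and \<beta>_def: "\<And>mm. \<beta> mm = orlicz_norm M \<psi> (\<lambda>\<omega>. d (X 1 \<omega>) (Xm mm \<omega>))"
    and \<beta>_finite: "\<And>mm. mm \<ge> 1 \<Longrightarrow> orlicz_finite M \<psi> (\<lambda>\<omega>. d (X 1 \<omega>) (Xm mm \<omega>))"
    and \<beta>_summable: "summable \<beta>"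
    and \<phi>_def: "\<And>h. \<phi> h = measure M {\<omega> \<in> space M. d (X 1 \<omega>) x \<le> h}"
    and k_def: "\<And>n \<omega>. k n \<omega> = card {i \<in> {1..n}. d (X (int i) \<omega>) x \<le> H n}"
    and H_order: "\<And>n. H' n < H n \<and> H n < H'' n"
    and m_range: "\<And>n. n \<ge> 1 \<Longrightarrow> 1 \<le> m n \<and> m n \<le> n"
    and lim: "filterlim (\<lambda>n. real n * \<phi> (H' n) / (real (m n) * ln (real n))) at_top sequentially"
    and sum1: "summable (\<lambda>n. real n / \<psi> ((H'' n - H n) / \<beta> (m n)))"
    and sum2: "summable (\<lambda>n. real n / \<psi> ((H n - H' n) / \<beta> (m n)))"
  shows "AE \<omega> in M. eventually (\<lambda>n. real n * \<phi> (H' n) / 2 \<le> real (k n \<omega>) \<and>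
                                     real (k n \<omega>) \<le> 2 * real n * \<phi> (H'' n)) sequentially"
proof -
  interpret bernoulli_shift M N F g \<alpha> \<alpha>' X Xm
    using P g_meas indep ident ident' X_def Xm_def
    by (intro bernoulli_shift.intro bernoulli_shift_axioms.intro)
  have dx: "(\<lambda>y. d y x) \<in> borel_measurable F"
    by (rule measurable_dist_point[OF d_meas x_in])
  let ?W = "\<lambda>n i. coupled (m n) (int i)"
  have close_H': "AE \<omega> in M. eventually (\<lambda>n. \<forall>i\<in>{1..n}.
      d (X (int i) \<omega>) (?W n i \<omega>) \<le> H n - H' n) sequentially"
    using m_range H_order
    by (intro AE_eventually_coupled_close[OF d_meas \<psi>_convex \<psi>_incr \<psi>0 \<beta>_def \<beta>_finite _ _ sum2]) auto
  have close_H'': "AE \<omega> in M. eventually (\<lambda>n. \<forall>i\<in>{1..n}.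
      d (X (int i) \<omega>) (?W n i \<omega>) \<le> H'' n - H n) sequentially"
    using m_range H_order
    by (intro AE_eventually_coupled_close[OF d_meas \<psi>_convex \<psi>_incr \<psi>0 \<beta>_def \<beta>_finite _ _ sum1]) auto
  have lower: "AE \<omega> in M. eventually (\<lambda>n.
      real n * \<phi> (H' n) / 2 \<le> card {i\<in>{1..n}. d (?W n i \<omega>) x \<le> H' n}) sequentially"
    by (rule AE_eventually_card_coupled_ball_ge[where d=d and x=x, OF dx \<phi>_def m_range lim])
  have upper: "AE \<omega> in M. eventually (\<lambda>n.
      card {i\<in>{1..n}. d (?W n i \<omega>) x \<le> H'' n} \<le> 2 * real n * \<phi> (H'' n)) sequentially"
  proof (rule AE_eventually_card_coupled_ball_le[where d=d and x=x, OF dx \<phi>_def m_range _ lim])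
    show "H' n \<le> H'' n" for n
      using H_order[of n] by linarith
  qed
  show ?thesis
    using AE_space close_H' close_H'' lower upper
  proof eventually_elim
    case (elim \<omega>)
    from elim(2-5) show ?case
    proof eventually_elim
      case (elim n)
      then have "card {i\<in>{1..n}. d (?W n i \<omega>) x \<le> H' n} \<le> k n \<omega>"
        and "k n \<omega> \<le> card {i\<in>{1..n}. d (?W n i \<omega>) x \<le> H'' n}"
        using card_balls_coupled_close(1)[OF semi x_in \<open>\<omega> \<in> space M\<close> elim(1), where r="H' n"]
          card_balls_coupled_close(2)[OF semi x_in \<open>\<omega> \<in> space M\<close> elim(2), where r="H n"]
        by (simp_all add: k_def)
      with elim show ?case
        by (smt (verit) of_nat_le_iff)
    qed
  qed
qed

end
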